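(* Let $\mathcal A=\{\mathbf p\in[0,1]^4: p_1=1\}$ be the set of agreeable memory-one strategies, with the subspace topology from $\mathbb R^4$. The set $\{\mathbf p\in\mathcal A:\ \mathbf p=(1,1,0,0)\text{ or }\mathbf p\text{ is of Nash type}\}$ is a closed convex set whose interior (relative to $\mathcal A$) is the set of good strategies.
   Context: Iterated Prisoner's Dilemma: payoffs $T>R>P>S$ with $2R>T+S$; outcomes of a round are ordered $cc,cd,dc,dd$ (first letter X's play, second Y's; $c$ = cooperate, $d$ = defect); payoff vectors $\mathbf S_X=(R,S,T,P)$, $\mathbf S_Y=(R,T,S,P)$. A memory-one strategy for X is $\mathbf p=(p_1,p_2,p_3,p_4)\in[0,1]^4$, where $p_i$ is the probability that X plays $c$ in the next round given that the current round had the $i$-th outcome. A strategy pattern for Y is an arbitrary (possibly randomized and history-dependent) rule for Y's play in each round. Given initial plays and the rules used, let $\mathbf v^n$ be the probability distribution of the outcome of round $n$; a limit distribution is any limit point $\mathbf v$ of the Cesàro averages $\frac1n\sum_{k=1}^n\mathbf v^k$, and the associated expected payoffs are $s_X=\langle\mathbf v\cdot\mathbf S_X\rangle$, $s_Y=\langle\mathbf v\cdot\mathbf S_Y\rangle$. $\mathbf p$ is agreeable if $p_1=1$. $\mathbf p$ is of Nash type if it is agreeable and, for every strategy pattern of Y and every associated limit distribution, $s_Y\ge R$ implies $s_Y=R$. $\mathbf p$ is good if it is agreeable and, for every strategy pattern of Y and every associated limit distribution, $s_Y\ge R$ implies $s_Y=s_X=R$. *)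

theory Defs
  imports "HOL-Analysis.Analysis"
begin

text \<open>Outcomes of a round, ordered cc, cd, dc, dd (first letter: X's play, second: Y's).\<close>
datatype outcome = CC | CD | DC | DD

lemma UNIV_outcome: "(UNIV :: outcome set) = {CC, CD, DC, DD}"
  using outcome.exhaust by auto

instance outcome :: finite
  by standard (simp add: UNIV_outcome)

fun xcoop :: "outcome \<Rightarrow> bool" where
  "xcoop CC = True" | "xcoop CD = True" | "xcoop DC = False" | "xcoop DD = False"

fun ycoop :: "outcome \<Rightarrow> bool" where
  "ycoop CC = True" | "ycoop CD = False" | "ycoop DC = True" | "ycoop DD = False"

definition outprob :: "real \<Rightarrow> real \<Rightarrow> outcome \<Rightarrow> real" where
  "outprob a b w = (if xcoop w then a else 1 - a) * (if ycoop w then b else 1 - b)"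

text \<open>Memory-one strategies are vectors in real^outcome (i.e. R^4, coordinates
  p_1..p_4 = p CC, p CD, p DC, p DD).  A strategy pattern for Y is a behaviour
  rule y: given the history so far (list of outcomes, most recent first) it
  gives the probability that Y cooperates.  q0 is X's probability of cooperating
  in the first round.  hist_prob gives the probability of a finite history
  (most recent outcome first).\<close>
fun hist_prob :: "real^outcome \<Rightarrow> real \<Rightarrow> (outcome list \<Rightarrow> real) \<Rightarrow> outcome list \<Rightarrow> real" where
  "hist_prob p q0 y [] = 1"
| "hist_prob p q0 y (w # h) =
     hist_prob p q0 y h * outprob (case h of [] \<Rightarrow> q0 | w' # _ \<Rightarrow> p $ w') (y h) w"

text \<open>Distribution of the outcome of round n+1.\<close>
definition round_dist :: "real^outcome \<Rightarrow> real \<Rightarrow> (outcome list \<Rightarrow> real) \<Rightarrow> nat \<Rightarrow> outcome \<Rightarrow> real" where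
  "round_dist p q0 y n w = (\<Sum>h\<in>{h :: outcome list. length h = n}. hist_prob p q0 y (w # h))"

definition cesaro :: "real^outcome \<Rightarrow> real \<Rightarrow> (outcome list \<Rightarrow> real) \<Rightarrow> nat \<Rightarrow> outcome \<Rightarrow> real" where
  "cesaro p q0 y n w = (\<Sum>k<n. round_dist p q0 y k w) / real n"

definition is_limit_dist :: "real^outcome \<Rightarrow> real \<Rightarrow> (outcome list \<Rightarrow> real) \<Rightarrow> (outcome \<Rightarrow> real) \<Rightarrow> bool" where
  "is_limit_dist p q0 y v \<longleftrightarrow>
     (\<exists>r. strict_mono r \<and> (\<forall>w. (\<lambda>k. cesaro p q0 y (r k) w) \<longlonglongrightarrow> v w))"

definition payX :: "real \<Rightarrow> real \<Rightarrow> real \<Rightarrow> real \<Rightarrow> outcome \<Rightarrow> real" where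
  "payX R S T P w = (case w of CC \<Rightarrow> R | CD \<Rightarrow> S | DC \<Rightarrow> T | DD \<Rightarrow> P)"

definition payY :: "real \<Rightarrow> real \<Rightarrow> real \<Rightarrow> real \<Rightarrow> outcome \<Rightarrow> real" where
  "payY R S T P w = (case w of CC \<Rightarrow> R | CD \<Rightarrow> T | DC \<Rightarrow> S | DD \<Rightarrow> P)"

definition score :: "(outcome \<Rightarrow> real) \<Rightarrow> (outcome \<Rightarrow> real) \<Rightarrow> real" where
  "score v pay = (\<Sum>w\<in>UNIV. v w * pay w)"

definition agreeable :: "real^outcome \<Rightarrow> bool" where
  "agreeable p \<longleftrightarrow> p $ CC = 1"

text \<open>Quantification over all initial plays q0 of X, all strategy patterns y of Y
  (including Y's initial play y []), and all associated limit distributions.\<close>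
definition nash_type :: "real \<Rightarrow> real \<Rightarrow> real \<Rightarrow> real \<Rightarrow> real^outcome \<Rightarrow> bool" where
  "nash_type R S T P p \<longleftrightarrow> agreeable p \<and>
     (\<forall>q0 y v. 0 \<le> q0 \<and> q0 \<le> 1 \<and> (\<forall>h. 0 \<le> y h \<and> y h \<le> 1) \<and> is_limit_dist p q0 y v
        \<and> score v (payY R S T P) \<ge> R \<longrightarrow> score v (payY R S T P) = R)"

definition good :: "real \<Rightarrow> real \<Rightarrow> real \<Rightarrow> real \<Rightarrow> real^outcome \<Rightarrow> bool" where
  "good R S T P p \<longleftrightarrow> agreeable p \<and>
     (\<forall>q0 y v. 0 \<le> q0 \<and> q0 \<le> 1 \<and> (\<forall>h. 0 \<le> y h \<and> y h \<le> 1) \<and> is_limit_dist p q0 y v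
        \<and> score v (payY R S T P) \<ge> R \<longrightarrow>
          score v (payY R S T P) = R \<and> score v (payX R S T P) = R)"

definition agreeable_strats :: "(real^outcome) set" where
  "agreeable_strats = {p. (\<forall>w. 0 \<le> p $ w \<and> p $ w \<le> 1) \<and> agreeable p}"

definition repeat_strat :: "real^outcome" where
  "repeat_strat = (\<chi> w. if xcoop w then 1 else 0)"

end

theory Submission
  imports Defs
begin

text \<open>Against any opponent, the probability that X cooperates in
  round k+1 is the expectation of p in round k; telescoping the Cesaro averages, every
  limit distribution v satisfies v(cd) (1 - p_2) = v(dc) p_3 + v(dd) p_4. Together with
  \<Sum>v = 1 this yields
    (1 - p_2) (s_Y - R) = v(dc) ((T-R) p_3 - (R-S) (1-p_2)) + v(dd) ((T-R) p_4 - (R-P) (1-p_2)).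
  So p is of Nash type iff p_2 < 1 and both brackets are \<le> 0, and good iff both are < 0:
  sufficiency is read off the identity, necessity comes from testing p against AllD and
  against the opponent defecting exactly after cc, whose limit distributions put weight
  on dd resp. dc only among those two outcomes. Repeat is the only agreeable strategy with
  p_2 = 1 satisfying the weak inequalities, so the set in question is the face p_1 = 1 of
  [0,1]^4 cut by two closed half-spaces, and its relative interior is cut by the open ones.\<close>

definition valid_play :: "real^outcome \<Rightarrow> real \<Rightarrow> (outcome list \<Rightarrow> real) \<Rightarrow> bool" where
  "valid_play p q0 y \<longleftrightarrow>
     (\<forall>w. 0 \<le> p $ w \<and> p $ w \<le> 1) \<and> 0 \<le> q0 \<and> q0 \<le> 1 \<and> (\<forall>h. 0 \<le> y h \<and> y h \<le> 1)"

lemma valid_playI: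
  "p \<in> agreeable_strats \<Longrightarrow> 0 \<le> q0 \<Longrightarrow> q0 \<le> 1 \<Longrightarrow> (\<forall>h. 0 \<le> y h \<and> y h \<le> 1) \<Longrightarrow> valid_play p q0 y"
  by (simp add: valid_play_def agreeable_strats_def)

lemma sum_UNIV_outcome: "(\<Sum>w\<in>UNIV. f w) = f CC + f CD + f DC + f DD"
  by (simp add: UNIV_outcome add.assoc)

lemma outprob_nonneg: "0 \<le> a \<Longrightarrow> a \<le> 1 \<Longrightarrow> 0 \<le> b \<Longrightarrow> b \<le> 1 \<Longrightarrow> 0 \<le> outprob a b w"
  by (simp add: outprob_def)

lemma sum_outprob: "(\<Sum>w\<in>UNIV. outprob a b w) = 1"
  by (simp add: sum_UNIV_outcome outprob_def algebra_simps)

lemma sum_outprob_xcoop: "(\<Sum>w\<in>UNIV. outprob a b w * of_bool (xcoop w)) = a"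
  by (simp add: sum_UNIV_outcome outprob_def algebra_simps)

lemma sum_outprob_ycoop: "(\<Sum>w\<in>UNIV. outprob a b w * of_bool (ycoop w)) = b"
  by (simp add: sum_UNIV_outcome outprob_def algebra_simps)

lemma hist_prob_nonneg:
  assumes "valid_play p q0 y"
  shows "0 \<le> hist_prob p q0 y h"
proof (induction h)
  case Nil
  then show ?case by simp
next
  case (Cons w h)
  have "0 \<le> outprob (case h of [] \<Rightarrow> q0 | w' # _ \<Rightarrow> p $ w') (y h) w"
    using assms by (intro outprob_nonneg) (auto simp: valid_play_def split: list.split)
  with Cons show ?case by simp
qed

lemma sum_lists_length_Suc:
  "(\<Sum>h\<in>{h :: 'a::finite list. length h = Suc n}. f h) = (\<Sum>w\<in>UNIV. \<Sum>h\<in>{h. length h = n}. f (w # h))"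
proof -
  have "{h :: 'a list. length h = Suc n} = (\<lambda>(w, h). w # h) ` (UNIV \<times> {h. length h = n})"
    by (auto simp: length_Suc_conv image_iff)
  moreover have "inj_on (\<lambda>(w, h). w # h) (UNIV \<times> {h :: 'a list. length h = n})"
    by (auto simp: inj_on_def)
  ultimately show ?thesis
    by (simp add: sum.reindex sum.cartesian_product split_def)
qed

lemma round_dist_0: "round_dist p q0 y 0 w = outprob q0 (y []) w"
  by (simp add: round_dist_def)

lemma round_dist_Suc:
  "round_dist p q0 y (Suc k) w' =
     (\<Sum>w\<in>UNIV. \<Sum>h\<in>{h. length h = k}. hist_prob p q0 y (w # h) * outprob (p $ w) (y (w # h)) w')"
  unfolding round_dist_def sum_lists_length_Suc by simp

lemma round_dist_Suc_memory_one:
  assumes "\<And>w h. y (w # h) = q w"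
  shows "round_dist p q0 y (Suc k) w' = (\<Sum>w\<in>UNIV. round_dist p q0 y k w * outprob (p $ w) (q w) w')"
proof -
  have "round_dist p q0 y (Suc k) w' =
    (\<Sum>w\<in>UNIV. \<Sum>h\<in>{h. length h = k}. hist_prob p q0 y (w # h) * outprob (p $ w) (q w) w')"
    unfolding round_dist_Suc assms ..
  then show ?thesis
    by (simp add: round_dist_def sum_distrib_right)
qed

lemma round_dist_nonneg: "valid_play p q0 y \<Longrightarrow> 0 \<le> round_dist p q0 y k w"
  unfolding round_dist_def by (intro sum_nonneg hist_prob_nonneg)

definition expect_round :: "real^outcome \<Rightarrow> real \<Rightarrow> (outcome list \<Rightarrow> real) \<Rightarrow> nat \<Rightarrow> (outcome \<Rightarrow> real) \<Rightarrow> real" where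
  "expect_round p q0 y k f = (\<Sum>w\<in>UNIV. round_dist p q0 y k w * f w)"

lemma expect_round_Suc:
  "expect_round p q0 y (Suc k) f =
     (\<Sum>w\<in>UNIV. \<Sum>h\<in>{h. length h = k}.
        hist_prob p q0 y (w # h) * (\<Sum>w'\<in>UNIV. outprob (p $ w) (y (w # h)) w' * f w'))"
proof -
  have "expect_round p q0 y (Suc k) f =
    (\<Sum>w'\<in>UNIV. \<Sum>w\<in>UNIV. \<Sum>h\<in>{h. length h = k}.
       hist_prob p q0 y (w # h) * (outprob (p $ w) (y (w # h)) w' * f w'))"
    unfolding expect_round_def round_dist_Suc by (simp add: sum_distrib_right mult.assoc)
  also have "\<dots> = (\<Sum>w\<in>UNIV. \<Sum>h\<in>{h. length h = k}. \<Sum>w'\<in>UNIV.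
       hist_prob p q0 y (w # h) * (outprob (p $ w) (y (w # h)) w' * f w'))"
    by (subst sum.swap) (rule sum.cong[OF refl], rule sum.swap)
  finally show ?thesis by (simp add: sum_distrib_left)
qed

lemma sum_round_dist: "(\<Sum>w\<in>UNIV. round_dist p q0 y k w) = 1"
proof (induction k)
  case 0
  then show ?case by (simp add: round_dist_0 sum_outprob)
next
  case (Suc k)
  have "(\<Sum>w\<in>UNIV. round_dist p q0 y (Suc k) w) = expect_round p q0 y (Suc k) (\<lambda>_. 1)"
    by (simp add: expect_round_def)
  also have "\<dots> = (\<Sum>w\<in>UNIV. round_dist p q0 y k w)"
    unfolding expect_round_Suc by (simp add: sum_outprob round_dist_def)
  finally show ?case using Suc by simp
qed

lemma expect_round_Suc_xcoop:
  "expect_round p q0 y (Suc k) (\<lambda>w. of_bool (xcoop w)) = expect_round p q0 y k (\<lambda>w. p $ w)"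
  unfolding expect_round_Suc
  by (simp add: sum_outprob_xcoop expect_round_def round_dist_def sum_distrib_right)

lemma expect_round_Suc_ycoop:
  assumes "\<And>w h. y (w # h) = q w"
  shows "expect_round p q0 y (Suc k) (\<lambda>w. of_bool (ycoop w)) = expect_round p q0 y k q"
  unfolding expect_round_Suc
  by (simp add: sum_outprob_ycoop expect_round_def round_dist_def sum_distrib_right assms)

lemma expect_round_bounds:
  assumes "valid_play p q0 y" and "\<And>w. 0 \<le> f w \<and> f w \<le> 1"
  shows "0 \<le> expect_round p q0 y k f \<and> expect_round p q0 y k f \<le> 1"
proof
  show "0 \<le> expect_round p q0 y k f"
    unfolding expect_round_def using assms round_dist_nonneg by (intro sum_nonneg) simp
  have "expect_round p q0 y k f \<le> (\<Sum>w\<in>UNIV. round_dist p q0 y k w)"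
    unfolding expect_round_def using assms round_dist_nonneg by (intro sum_mono mult_left_le) auto
  then show "expect_round p q0 y k f \<le> 1"
    by (simp add: sum_round_dist)
qed

lemma cesaro_expect:
  "(\<Sum>w\<in>UNIV. cesaro p q0 y n w * f w) = (\<Sum>k<n. expect_round p q0 y k f) / real n"
proof -
  have "(\<Sum>w\<in>UNIV. cesaro p q0 y n w * f w) = (\<Sum>w\<in>UNIV. \<Sum>k<n. round_dist p q0 y k w * f w) / real n"
    unfolding cesaro_def by (simp add: sum_divide_distrib sum_distrib_right)
  also have "\<dots> = (\<Sum>k<n. expect_round p q0 y k f) / real n"
    unfolding expect_round_def by (subst sum.swap) (rule refl)
  finally show ?thesis .
qed

lemma cesaro_nonneg: "valid_play p q0 y \<Longrightarrow> 0 \<le> cesaro p q0 y n w"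
  unfolding cesaro_def by (intro divide_nonneg_nonneg sum_nonneg round_dist_nonneg) auto

lemma sum_cesaro: "n \<noteq> 0 \<Longrightarrow> (\<Sum>w\<in>UNIV. cesaro p q0 y n w) = 1"
  using cesaro_expect[of p q0 y n "\<lambda>_. 1"] by (simp add: expect_round_def sum_round_dist)

lemma cesaro_le_1:
  assumes "valid_play p q0 y"
  shows "cesaro p q0 y n w \<le> 1"
proof (cases "n = 0")
  case True
  then show ?thesis by (simp add: cesaro_def)
next
  case False
  have "cesaro p q0 y n w \<le> (\<Sum>w\<in>UNIV. cesaro p q0 y n w)"
    by (rule member_le_sum) (auto intro: cesaro_nonneg[OF assms])
  with False show ?thesis by (simp add: sum_cesaro)
qed

lemma limit_dist_exists:
  assumes "valid_play p q0 y"
  obtains v where "is_limit_dist p q0 y v"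
proof -
  define F where "F n = (\<chi> w. cesaro p q0 y n w)" for n
  have "norm (F n) \<le> real CARD(outcome)" for n
  proof -
    have "norm (F n) \<le> (\<Sum>w\<in>UNIV. \<bar>F n $ w\<bar>)" by (rule norm_le_l1_cart)
    also have "\<dots> \<le> (\<Sum>w\<in>(UNIV :: outcome set). 1)"
      unfolding F_def using cesaro_nonneg[OF assms] cesaro_le_1[OF assms] by (intro sum_mono) auto
    finally show ?thesis by simp
  qed
  then have "bounded (range F)"
    unfolding bounded_iff by blast
  then obtain l r where "strict_mono r" "(F \<circ> r) \<longlonglongrightarrow> l"
    using bounded_imp_convergent_subsequence by blast
  moreover have "(\<lambda>k. cesaro p q0 y (r k) w) \<longlonglongrightarrow> l $ w" for w
    using tendsto_vec_nth[OF \<open>(F \<circ> r) \<longlonglongrightarrow> l\<close>, of w] by (simp add: F_def comp_def)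
  ultimately show ?thesis
    using that unfolding is_limit_dist_def by blast
qed

lemma limit_dist_nonneg:
  assumes "valid_play p q0 y" and "is_limit_dist p q0 y v"
  shows "0 \<le> v w"
proof -
  obtain r where "\<And>w. (\<lambda>k. cesaro p q0 y (r k) w) \<longlonglongrightarrow> v w"
    using assms(2) unfolding is_limit_dist_def by blast
  then show ?thesis
    by (rule LIMSEQ_le_const) (auto intro: cesaro_nonneg[OF assms(1)])
qed

lemma sum_limit_dist:
  assumes "is_limit_dist p q0 y v"
  shows "(\<Sum>w\<in>UNIV. v w) = 1"
proof -
  obtain r where r: "strict_mono r" "\<And>w. (\<lambda>k. cesaro p q0 y (r k) w) \<longlonglongrightarrow> v w"
    using assms unfolding is_limit_dist_def by blast
  have "(\<lambda>k. \<Sum>w\<in>UNIV. cesaro p q0 y (r k) w) \<longlonglongrightarrow> (\<Sum>w\<in>UNIV. v w)"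
    by (intro tendsto_sum r(2))
  moreover have "\<forall>\<^sub>F k in sequentially. (\<Sum>w\<in>UNIV. cesaro p q0 y (r k) w) = 1"
  proof (rule eventually_sequentiallyI)
    fix k :: nat
    assume "1 \<le> k"
    then have "r k \<noteq> 0"
      using seq_suble[OF r(1), of k] by linarith
    then show "(\<Sum>w\<in>UNIV. cesaro p q0 y (r k) w) = 1"
      by (rule sum_cesaro)
  qed
  then have "(\<lambda>k. \<Sum>w\<in>UNIV. cesaro p q0 y (r k) w) \<longlonglongrightarrow> 1"
    by (rule tendsto_eventually)
  ultimately show ?thesis
    by (rule LIMSEQ_unique)
qed

lemma limit_dist_eq_0:
  assumes "is_limit_dist p q0 y v" and "\<And>k. round_dist p q0 y k w = 0"
  shows "v w = 0"
proof -
  obtain r where "(\<lambda>k. cesaro p q0 y (r k) w) \<longlonglongrightarrow> v w"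
    using assms(1) unfolding is_limit_dist_def by blast
  moreover have "cesaro p q0 y n w = 0" for n
    by (simp add: cesaro_def assms(2))
  ultimately show ?thesis
    by (simp add: LIMSEQ_const_iff)
qed

text \<open>The Cesaro averages of f - g telescope to (?E n - ?E 0) / n with ?E bounded.\<close>
lemma limit_dist_telescope:
  assumes "valid_play p q0 y" and "is_limit_dist p q0 y v"
    and step: "\<And>k. expect_round p q0 y (Suc k) g = expect_round p q0 y k f"
    and g: "\<And>w. 0 \<le> g w \<and> g w \<le> 1"
  shows "(\<Sum>w\<in>UNIV. v w * (f w - g w)) = 0"
proof -
  let ?E = "\<lambda>n. expect_round p q0 y n g"
  have cesaro_diff: "(\<Sum>w\<in>UNIV. cesaro p q0 y n w * (f w - g w)) = (?E n - ?E 0) / real n" for n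
  proof -
    have "expect_round p q0 y k (\<lambda>w. f w - g w) = ?E (Suc k) - ?E k" for k
      unfolding step by (simp add: expect_round_def right_diff_distrib sum_subtractf)
    then show ?thesis
      unfolding cesaro_expect using sum_lessThan_telescope[of ?E n] by simp
  qed
  have E_bounds: "0 \<le> ?E n \<and> ?E n \<le> 1" for n
    using expect_round_bounds[OF assms(1) g] .
  have "(\<lambda>n. (?E n - ?E 0) / real n) \<longlonglongrightarrow> 0"
  proof (rule real_tendsto_sandwich)
    show "\<forall>\<^sub>F n in sequentially. - 1 / real n \<le> (?E n - ?E 0) / real n"
      using E_bounds by (intro always_eventually allI divide_right_mono) (smt (verit), simp)
    show "\<forall>\<^sub>F n in sequentially. (?E n - ?E 0) / real n \<le> 1 / real n"
      using E_bounds by (intro always_eventually allI divide_right_mono) (smt (verit), simp)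
  qed (rule lim_const_over_n)+
  moreover obtain r where r: "strict_mono r" "\<And>w. (\<lambda>k. cesaro p q0 y (r k) w) \<longlonglongrightarrow> v w"
    using assms(2) unfolding is_limit_dist_def by blast
  ultimately have "(\<lambda>k. \<Sum>w\<in>UNIV. cesaro p q0 y (r k) w * (f w - g w)) \<longlonglongrightarrow> 0"
    using LIMSEQ_subseq_LIMSEQ by (simp add: cesaro_diff comp_def)
  moreover have "(\<lambda>k. \<Sum>w\<in>UNIV. cesaro p q0 y (r k) w * (f w - g w)) \<longlonglongrightarrow> (\<Sum>w\<in>UNIV. v w * (f w - g w))"
    by (intro tendsto_sum tendsto_mult_right r(2))
  ultimately show ?thesis
    using LIMSEQ_unique by blast
qed

lemma limit_dist_agreeable:
  assumes "p \<in> agreeable_strats" and "valid_play p q0 y" and "is_limit_dist p q0 y v"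
  shows "v CC + v CD + v DC + v DD = 1"
    and "v CD * (1 - p $ CD) = v DC * p $ DC + v DD * p $ DD"
proof -
  show "v CC + v CD + v DC + v DD = 1"
    using sum_limit_dist[OF assms(3)] by (simp add: sum_UNIV_outcome)
  have "(\<Sum>w\<in>UNIV. v w * (p $ w - of_bool (xcoop w))) = 0"
    using assms(2,3) expect_round_Suc_xcoop by (rule limit_dist_telescope) simp
  with assms(1) show "v CD * (1 - p $ CD) = v DC * p $ DC + v DD * p $ DD"
    by (simp add: sum_UNIV_outcome agreeable_strats_def agreeable_def algebra_simps)
qed

lemma score_payY: "score v (payY R S T P) = v CC * R + v CD * T + v DC * S + v DD * P"
  by (simp add: score_def payY_def sum_UNIV_outcome)

lemma score_payX: "score v (payX R S T P) = v CC * R + v CD * S + v DC * T + v DD * P"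
  by (simp add: score_def payX_def sum_UNIV_outcome)

lemma limit_dist_payoff_gap:
  assumes "p \<in> agreeable_strats" and "valid_play p q0 y" and "is_limit_dist p q0 y v"
  shows "(1 - p $ CD) * (score v (payY R S T P) - R) =
    v DC * ((T - R) * p $ DC - (R - S) * (1 - p $ CD)) + v DD * ((T - R) * p $ DD - (R - P) * (1 - p $ CD))"
proof -
  have vCC: "v CC = 1 - v CD - v DC - v DD"
    using limit_dist_agreeable(1)[OF assms] by simp
  have "(1 - p $ CD) * (score v (payY R S T P) - R) =
      (T - R) * (v CD * (1 - p $ CD)) - (1 - p $ CD) * v DC * (R - S) - (1 - p $ CD) * v DD * (R - P)"
    unfolding score_payY vCC by (simp add: algebra_simps)
  also have "\<dots> = v DC * ((T - R) * p $ DC - (R - S) * (1 - p $ CD)) + v DD * ((T - R) * p $ DD - (R - P) * (1 - p $ CD))"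
    unfolding limit_dist_agreeable(2)[OF assms] by (simp add: algebra_simps)
  finally show ?thesis .
qed

lemma valid_play_always_defect: "p \<in> agreeable_strats \<Longrightarrow> valid_play p 1 (\<lambda>_. 0)"
  by (rule valid_playI) simp_all

lemma round_dist_always_defect_ycoop:
  "ycoop w \<Longrightarrow> round_dist p q0 (\<lambda>_. 0) k w = 0"
  by (cases w) (simp_all add: round_dist_def outprob_def)

lemma always_defect_limit_dist:
  assumes "p \<in> agreeable_strats" and "is_limit_dist p 1 (\<lambda>_. 0) v"
  shows "v CC = 0" and "v DC = 0" and "p $ CD = 1 \<Longrightarrow> v DD = 0"
proof -
  show "v CC = 0" "v DC = 0"
    using assms(2) by (rule limit_dist_eq_0, simp add: round_dist_always_defect_ycoop)+
  assume "p $ CD = 1"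
  have "round_dist p 1 (\<lambda>_. 0) k DD = 0" for k
  proof (induction k)
    case 0
    then show ?case by (simp add: round_dist_0 outprob_def)
  next
    case (Suc k)
    have "round_dist p 1 (\<lambda>_. 0) (Suc k) DD = (\<Sum>w\<in>UNIV. round_dist p 1 (\<lambda>_. 0) k w * outprob (p $ w) 0 DD)"
      by (rule round_dist_Suc_memory_one) (rule refl)
    also have "\<dots> = 0"
      using Suc \<open>p $ CD = 1\<close> assms(1) round_dist_always_defect_ycoop[of DC]
      by (simp add: sum_UNIV_outcome outprob_def agreeable_strats_def agreeable_def)
    finally show ?case .
  qed
  with assms(2) show "v DD = 0"
    by (rule limit_dist_eq_0)
qed

definition defect_after_CC :: "outcome list \<Rightarrow> real" where
  "defect_after_CC h = (case h of [] \<Rightarrow> 1 | w # _ \<Rightarrow> of_bool (w \<noteq> CC))"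

lemma valid_play_defect_after_CC: "p \<in> agreeable_strats \<Longrightarrow> valid_play p 1 defect_after_CC"
  by (rule valid_playI) (simp_all add: defect_after_CC_def split: list.split)

lemma defect_after_CC_limit_dist:
  assumes "p \<in> agreeable_strats" and "is_limit_dist p 1 defect_after_CC v"
  shows "v DD = 0" and "v CC = v CD"
proof -
  define q :: "outcome \<Rightarrow> real" where "q w = of_bool (w \<noteq> CC)" for w
  have y: "defect_after_CC (w # h) = q w" for w h
    by (simp add: defect_after_CC_def q_def)
  have "round_dist p 1 defect_after_CC k DD = 0" for k
  proof (cases k)
    case 0
    then show ?thesis by (simp add: round_dist_0 outprob_def defect_after_CC_def)
  next
    case (Suc j)
    have "round_dist p 1 defect_after_CC (Suc j) DD =
        (\<Sum>w\<in>UNIV. round_dist p 1 defect_after_CC j w * outprob (p $ w) (q w) DD)"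
      using y by (rule round_dist_Suc_memory_one)
    also have "\<dots> = 0"
      using assms(1) by (simp add: sum_UNIV_outcome outprob_def q_def agreeable_strats_def agreeable_def)
    finally show ?thesis using Suc by simp
  qed
  with assms(2) show "v DD = 0"
    by (rule limit_dist_eq_0)
  have "(\<Sum>w\<in>UNIV. v w * (q w - of_bool (ycoop w))) = 0"
    using valid_play_defect_after_CC[OF assms(1)] assms(2) expect_round_Suc_ycoop[of defect_after_CC q, OF y]
    by (rule limit_dist_telescope) simp
  with \<open>v DD = 0\<close> show "v CC = v CD"
    by (simp add: sum_UNIV_outcome q_def)
qed

definition nash_ineqs :: "real \<Rightarrow> real \<Rightarrow> real \<Rightarrow> real \<Rightarrow> real^outcome \<Rightarrow> bool" where
  "nash_ineqs R S T P p \<longleftrightarrow>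
     (T - R) * p $ DC \<le> (R - S) * (1 - p $ CD) \<and> (T - R) * p $ DD \<le> (R - P) * (1 - p $ CD)"

definition good_ineqs :: "real \<Rightarrow> real \<Rightarrow> real \<Rightarrow> real \<Rightarrow> real^outcome \<Rightarrow> bool" where
  "good_ineqs R S T P p \<longleftrightarrow>
     (T - R) * p $ DC < (R - S) * (1 - p $ CD) \<and> (T - R) * p $ DD < (R - P) * (1 - p $ CD)"

lemma nash_type_score_le:
  assumes "nash_type R S T P p" and "valid_play p q0 y" and "is_limit_dist p q0 y v"
  shows "score v (payY R S T P) \<le> R"
proof -
  have "R \<le> score v (payY R S T P) \<longrightarrow> score v (payY R S T P) = R"
    using assms unfolding nash_type_def valid_play_def by blast
  then show ?thesis by linarith
qed

lemma good_score_eq: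
  assumes "good R S T P p" and "valid_play p q0 y" and "is_limit_dist p q0 y v"
    and "score v (payY R S T P) = R"
  shows "score v (payX R S T P) = R"
  using assms unfolding good_def valid_play_def by (metis order_refl)

context
  fixes R S T P :: real
  assumes TR: "R < T" and PR: "P < R" and SP: "S < P" and TS: "T + S < 2 * R"
begin

lemma nash_type_CD_lt_1:
  assumes "p \<in> agreeable_strats" and "nash_type R S T P p"
  shows "p $ CD < 1"
proof (rule ccontr)
  assume "\<not> p $ CD < 1"
  moreover have "p $ CD \<le> 1"
    using assms(1) by (simp add: agreeable_strats_def)
  ultimately have "p $ CD = 1" by simp
  note play = valid_play_always_defect[OF assms(1)]
  then obtain v where v: "is_limit_dist p 1 (\<lambda>_. 0) v"
    by (rule limit_dist_exists)
  note zero = always_defect_limit_dist[OF assms(1) v]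
  have "v CD = 1"
    using limit_dist_agreeable(1)[OF assms(1) play v] zero \<open>p $ CD = 1\<close> by simp
  then have "score v (payY R S T P) = T"
    using zero \<open>p $ CD = 1\<close> by (simp add: score_payY)
  with nash_type_score_le[OF assms(2) play v] TR show False
    by simp
qed

lemma always_defect_gap:
  assumes "p \<in> agreeable_strats" and "p $ CD < 1" and "is_limit_dist p 1 (\<lambda>_. 0) v"
  shows "0 < v DD"
    and "(1 - p $ CD) * (score v (payY R S T P) - R) = v DD * ((T - R) * p $ DD - (R - P) * (1 - p $ CD))"
    and "score v (payX R S T P) < R"
proof -
  note play = valid_play_always_defect[OF assms(1)]
  note zero = always_defect_limit_dist(1,2)[OF assms(1,3)]
  note sum = limit_dist_agreeable(1)[OF assms(1) play assms(3)]
    and balance = limit_dist_agreeable(2)[OF assms(1) play assms(3)]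
  show "0 < v DD"
  proof (rule ccontr)
    assume "\<not> 0 < v DD"
    with limit_dist_nonneg[OF play assms(3), of DD] have "v DD = 0" by simp
    with sum zero balance assms(2) show False by simp
  qed
  show "(1 - p $ CD) * (score v (payY R S T P) - R) = v DD * ((T - R) * p $ DD - (R - P) * (1 - p $ CD))"
    using limit_dist_payoff_gap[OF assms(1) play assms(3)] zero by simp
  have "score v (payX R S T P) = v CD * S + v DD * P"
    using zero by (simp add: score_payX)
  also have "\<dots> \<le> v CD * P + v DD * P"
    using limit_dist_nonneg[OF play assms(3), of CD] SP by (simp add: mult_left_mono)
  also have "\<dots> = P"
    using sum zero by (simp add: distrib_right[symmetric])
  finally show "score v (payX R S T P) < R"
    using PR by simp
qed

lemma defect_after_CC_gap:
  assumes "p \<in> agreeable_strats" and "p $ CD < 1" and "is_limit_dist p 1 defect_after_CC v"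
  shows "0 < v DC"
    and "(1 - p $ CD) * (score v (payY R S T P) - R) = v DC * ((T - R) * p $ DC - (R - S) * (1 - p $ CD))"
    and "score v (payX R S T P) + score v (payY R S T P) < 2 * R"
proof -
  note play = valid_play_defect_after_CC[OF assms(1)]
  note limit = defect_after_CC_limit_dist[OF assms(1,3)]
  note sum = limit_dist_agreeable(1)[OF assms(1) play assms(3)]
    and balance = limit_dist_agreeable(2)[OF assms(1) play assms(3)]
  show "0 < v DC"
  proof (rule ccontr)
    assume "\<not> 0 < v DC"
    with limit_dist_nonneg[OF play assms(3), of DC] have "v DC = 0" by simp
    with sum limit balance assms(2) show False by simp
  qed
  show "(1 - p $ CD) * (score v (payY R S T P) - R) = v DC * ((T - R) * p $ DC - (R - S) * (1 - p $ CD))"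
    using limit_dist_payoff_gap[OF assms(1) play assms(3)] limit by simp
  have vCC: "v CC = 1 - v CD - v DC"
    using sum limit by simp
  have "score v (payX R S T P) + score v (payY R S T P) - 2 * R = (v CD + v DC) * (T + S - 2 * R)"
    unfolding score_payX score_payY vCC using limit by (simp add: algebra_simps)
  also have "\<dots> < 0"
    using \<open>0 < v DC\<close> limit_dist_nonneg[OF play assms(3), of CD] TS by (simp add: mult_pos_neg)
  finally show "score v (payX R S T P) + score v (payY R S T P) < 2 * R"
    by simp
qed

lemma nash_type_imp_nash_ineqs:
  assumes "p \<in> agreeable_strats" and "nash_type R S T P p"
  shows "nash_ineqs R S T P p"
proof -
  have CD: "p $ CD < 1"
    using assms by (rule nash_type_CD_lt_1)
  obtain v where v: "is_limit_dist p 1 (\<lambda>_. 0) v"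
    using limit_dist_exists valid_play_always_defect[OF assms(1)] by blast
  have "v DD * ((T - R) * p $ DD - (R - P) * (1 - p $ CD)) = (1 - p $ CD) * (score v (payY R S T P) - R)"
    using always_defect_gap(2)[OF assms(1) CD v] by simp
  also have "\<dots> \<le> 0"
    using CD nash_type_score_le[OF assms(2) valid_play_always_defect[OF assms(1)] v]
    by (intro mult_nonneg_nonpos) auto
  finally have DD: "(T - R) * p $ DD \<le> (R - P) * (1 - p $ CD)"
    using always_defect_gap(1)[OF assms(1) CD v] by (simp add: mult_le_0_iff)
  obtain v where v: "is_limit_dist p 1 defect_after_CC v"
    using limit_dist_exists valid_play_defect_after_CC[OF assms(1)] by blast
  have "v DC * ((T - R) * p $ DC - (R - S) * (1 - p $ CD)) = (1 - p $ CD) * (score v (payY R S T P) - R)"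
    using defect_after_CC_gap(2)[OF assms(1) CD v] by simp
  also have "\<dots> \<le> 0"
    using CD nash_type_score_le[OF assms(2) valid_play_defect_after_CC[OF assms(1)] v]
    by (intro mult_nonneg_nonpos) auto
  finally have DC: "(T - R) * p $ DC \<le> (R - S) * (1 - p $ CD)"
    using defect_after_CC_gap(1)[OF assms(1) CD v] by (simp add: mult_le_0_iff)
  from DC DD show ?thesis
    unfolding nash_ineqs_def ..
qed

lemma nash_ineqs_imp_nash_type:
  assumes "p \<in> agreeable_strats" and "p $ CD < 1" and "nash_ineqs R S T P p"
  shows "nash_type R S T P p"
  unfolding nash_type_def
proof (intro conjI allI impI)
  show "agreeable p"
    using assms(1) by (simp add: agreeable_strats_def)
  fix q0 y v
  assume H: "0 \<le> q0 \<and> q0 \<le> 1 \<and> (\<forall>h. 0 \<le> y h \<and> y h \<le> 1) \<and> is_limit_dist p q0 y v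
    \<and> R \<le> score v (payY R S T P)"
  then have play: "valid_play p q0 y" and v: "is_limit_dist p q0 y v"
    using valid_playI[OF assms(1)] by auto
  have "v DC * ((T - R) * p $ DC - (R - S) * (1 - p $ CD)) \<le> 0"
    and "v DD * ((T - R) * p $ DD - (R - P) * (1 - p $ CD)) \<le> 0"
    using assms(3) limit_dist_nonneg[OF play v] unfolding nash_ineqs_def
    by (auto intro: mult_nonneg_nonpos)
  then have "(1 - p $ CD) * (score v (payY R S T P) - R) \<le> 0"
    unfolding limit_dist_payoff_gap[OF assms(1) play v] by linarith
  with assms(2) H show "score v (payY R S T P) = R"
    by (simp add: mult_le_0_iff)
qed

lemma good_ineqs_imp_good:
  assumes "p \<in> agreeable_strats" and "good_ineqs R S T P p"
  shows "good R S T P p"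
  unfolding good_def
proof (intro conjI allI impI)
  show "agreeable p"
    using assms(1) by (simp add: agreeable_strats_def)
  have "0 \<le> (T - R) * p $ DD"
    using assms(1) TR by (simp add: agreeable_strats_def)
  then have CD: "p $ CD < 1"
    using assms(2) PR unfolding good_ineqs_def by (smt (verit) mult_le_0_iff)
  fix q0 y v
  assume H: "0 \<le> q0 \<and> q0 \<le> 1 \<and> (\<forall>h. 0 \<le> y h \<and> y h \<le> 1) \<and> is_limit_dist p q0 y v
    \<and> R \<le> score v (payY R S T P)"
  then have play: "valid_play p q0 y" and v: "is_limit_dist p q0 y v"
    using valid_playI[OF assms(1)] by auto
  have DC: "(T - R) * p $ DC - (R - S) * (1 - p $ CD) < 0"
    and DD: "(T - R) * p $ DD - (R - P) * (1 - p $ CD) < 0"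
    using assms(2) unfolding good_ineqs_def by auto
  have "0 \<le> (1 - p $ CD) * (score v (payY R S T P) - R)"
    using CD H by simp
  then have "0 \<le> v DC * ((T - R) * p $ DC - (R - S) * (1 - p $ CD)) + v DD * ((T - R) * p $ DD - (R - P) * (1 - p $ CD))"
    unfolding limit_dist_payoff_gap[OF assms(1) play v] .
  moreover have "v DC * ((T - R) * p $ DC - (R - S) * (1 - p $ CD)) \<le> 0"
    and "v DD * ((T - R) * p $ DD - (R - P) * (1 - p $ CD)) \<le> 0"
    using DC DD limit_dist_nonneg[OF play v] by (auto intro: mult_nonneg_nonpos)
  ultimately have "v DC * ((T - R) * p $ DC - (R - S) * (1 - p $ CD)) = 0"
    and "v DD * ((T - R) * p $ DD - (R - P) * (1 - p $ CD)) = 0"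
    by linarith+
  then have "v DC = 0" and "v DD = 0"
    using DC DD by auto
  moreover have "v CD = 0"
    using limit_dist_agreeable(2)[OF assms(1) play v] CD \<open>v DC = 0\<close> \<open>v DD = 0\<close> by simp
  moreover have "v CC = 1"
    using limit_dist_agreeable(1)[OF assms(1) play v] calculation by simp
  ultimately show "score v (payY R S T P) = R" and "score v (payX R S T P) = R"
    by (simp_all add: score_payY score_payX)
qed

lemma good_imp_good_ineqs:
  assumes "p \<in> agreeable_strats" and "good R S T P p"
  shows "good_ineqs R S T P p"
proof -
  have nash: "nash_type R S T P p"
    using assms(2) unfolding good_def nash_type_def by blast
  then have CD: "p $ CD < 1" and ineqs: "nash_ineqs R S T P p"
    using assms(1) nash_type_CD_lt_1 nash_type_imp_nash_ineqs by blast+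
  have DD: "(T - R) * p $ DD \<noteq> (R - P) * (1 - p $ CD)"
  proof
    assume eq: "(T - R) * p $ DD = (R - P) * (1 - p $ CD)"
    obtain v where v: "is_limit_dist p 1 (\<lambda>_. 0) v"
      using limit_dist_exists valid_play_always_defect[OF assms(1)] by blast
    have "score v (payY R S T P) = R"
      using always_defect_gap(2)[OF assms(1) CD v] eq CD by simp
    then have "score v (payX R S T P) = R"
      using good_score_eq[OF assms(2) valid_play_always_defect[OF assms(1)] v] by simp
    with always_defect_gap(3)[OF assms(1) CD v] show False
      by simp
  qed
  have DC: "(T - R) * p $ DC \<noteq> (R - S) * (1 - p $ CD)"
  proof
    assume eq: "(T - R) * p $ DC = (R - S) * (1 - p $ CD)"
    obtain v where v: "is_limit_dist p 1 defect_after_CC v"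
      using limit_dist_exists valid_play_defect_after_CC[OF assms(1)] by blast
    have "score v (payY R S T P) = R"
      using defect_after_CC_gap(2)[OF assms(1) CD v] eq CD by simp
    moreover have "score v (payX R S T P) = R"
      using good_score_eq[OF assms(2) valid_play_defect_after_CC[OF assms(1)] v] calculation .
    ultimately show False
      using defect_after_CC_gap(3)[OF assms(1) CD v] by simp
  qed
  from ineqs DC DD show ?thesis
    unfolding nash_ineqs_def good_ineqs_def by auto
qed

lemma good_iff_good_ineqs:
  "p \<in> agreeable_strats \<Longrightarrow> good R S T P p \<longleftrightarrow> good_ineqs R S T P p"
  using good_imp_good_ineqs good_ineqs_imp_good by blast

lemma repeat_or_nash_type_iff_nash_ineqs:
  assumes "p \<in> agreeable_strats"
  shows "p = repeat_strat \<or> nash_type R S T P p \<longleftrightarrow> nash_ineqs R S T P p"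
proof
  assume "p = repeat_strat \<or> nash_type R S T P p"
  then show "nash_ineqs R S T P p"
    using assms nash_type_imp_nash_ineqs by (auto simp: nash_ineqs_def repeat_strat_def)
next
  assume ineqs: "nash_ineqs R S T P p"
  show "p = repeat_strat \<or> nash_type R S T P p"
  proof (cases "p $ CD < 1")
    case True
    with assms ineqs show ?thesis
      by (simp add: nash_ineqs_imp_nash_type)
  next
    case False
    have bounds: "0 \<le> p $ w" "p $ w \<le> 1" "p $ CC = 1" for w
      using assms by (simp_all add: agreeable_strats_def agreeable_def)
    with False have "p $ CD = 1"
      by (meson antisym not_le)
    with ineqs TR have "p $ DC \<le> 0" "p $ DD \<le> 0"
      by (simp_all add: nash_ineqs_def mult_le_0_iff)
    with bounds \<open>p $ CD = 1\<close> have "p = repeat_strat"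
      unfolding repeat_strat_def vec_eq_iff by (auto intro: antisym elim: xcoop.elims)
    then show ?thesis ..
  qed
qed

end

lemma closed_agreeable_strats: "closed agreeable_strats"
proof -
  have "agreeable_strats = {p. \<forall>w. 0 \<le> p $ w \<and> p $ w \<le> 1} \<inter> {p. p $ CC = 1}"
    by (auto simp: agreeable_strats_def agreeable_def)
  also have "closed \<dots>"
    by (intro closed_Int closed_Collect_all closed_Collect_conj closed_Collect_le closed_Collect_eq
        continuous_intros)
  finally show ?thesis .
qed

lemma convex_agreeable_strats: "convex agreeable_strats"
proof -
  have "agreeable_strats = {p. \<forall>w. 0 \<le> p $ w \<and> p $ w \<le> 1} \<inter> {p. inner (axis CC 1) p = 1}"
    by (auto simp: agreeable_strats_def agreeable_def inner_axis')
  also have "convex \<dots>"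
    using convex_real_interval(5)[of 0 1]
    by (intro convex_Int convex_box_cart convex_hyperplane) (simp add: atLeastAtMost_def atLeast_def atMost_def Collect_conj_eq)
  finally show ?thesis .
qed

lemma closed_CD_constraint: "closed {q :: real^outcome. a * q $ u \<le> b * (1 - q $ CD)}"
  by (intro closed_Collect_le continuous_intros)

lemma convex_CD_constraint: "convex {q :: real^outcome. a * q $ u \<le> b * (1 - q $ CD)}"
proof -
  have "{q :: real^outcome. a * q $ u \<le> b * (1 - q $ CD)} = {q. inner (a *\<^sub>R axis u 1 + b *\<^sub>R axis CD 1) q \<le> b}"
    by (auto simp: inner_add_left inner_axis' algebra_simps)
  then show ?thesis
    using convex_halfspace_le by metis
qed

lemma interior_of_agreeable_shift:
  assumes "p \<in> top_of_set agreeable_strats interior_of U" and "w \<noteq> CC" and "p $ w < 1"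
  obtains d where "0 < d" and "p + d *\<^sub>R axis w 1 \<in> U"
proof -
  obtain V where "open V" "p \<in> agreeable_strats \<inter> V" "agreeable_strats \<inter> V \<subseteq> U"
    using assms(1) unfolding interior_of_def openin_open by blast
  then obtain e where "0 < e" "ball p e \<subseteq> V"
    using open_contains_ball by blast
  define d where "d = min (e / 2) (1 - p $ w)"
  have d: "0 < d" "d < e" "d \<le> 1 - p $ w"
    using \<open>0 < e\<close> assms(3) by (auto simp: d_def)
  have "p + d *\<^sub>R axis w 1 \<in> agreeable_strats"
    using \<open>p \<in> agreeable_strats \<inter> V\<close> d assms(2)
    by (auto simp: agreeable_strats_def agreeable_def axis_def)
  moreover have "p + d *\<^sub>R axis w 1 \<in> ball p e"
    using d by (simp add: dist_norm)
  ultimately show ?thesis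
    using that d \<open>ball p e \<subseteq> V\<close> \<open>agreeable_strats \<inter> V \<subseteq> U\<close> by blast
qed

text \<open>On the boundary of the constraint, raising p(u) or p(CD), one of which is below 1
  since a > 0 = b (1 - 1), leaves the constraint set.\<close>
lemma CD_constraint_strict_if_interior_of:
  assumes "0 < a" and "0 < b" and "u \<noteq> CC" and "u \<noteq> CD"
    and int: "p \<in> top_of_set agreeable_strats interior_of (agreeable_strats \<inter> {q. a * q $ u \<le> b * (1 - q $ CD)})"
    (is "p \<in> _ interior_of (_ \<inter> ?C)")
  shows "a * p $ u < b * (1 - p $ CD)"
proof -
  have A: "p \<in> agreeable_strats" and le: "a * p $ u \<le> b * (1 - p $ CD)"
    using subsetD[OF interior_of_subset int] by simp_all
  have "a * p $ u \<noteq> b * (1 - p $ CD)"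
  proof
    assume eq: "a * p $ u = b * (1 - p $ CD)"
    show False
    proof (cases "p $ u < 1")
      case True
      then obtain d where "0 < d" "p + d *\<^sub>R axis u 1 \<in> ?C"
        using interior_of_agreeable_shift[OF int assms(3)] by blast
      then have "a * p $ u + a * d \<le> b * (1 - p $ CD)"
        using assms(4) by (simp add: axis_def distrib_left)
      moreover have "0 < a * d"
        using assms(1) \<open>0 < d\<close> by simp
      ultimately show False
        using eq by linarith
    next
      case False
      with A have "p $ u = 1"
        by (simp add: agreeable_strats_def) (meson antisym not_le)
      with eq assms(1) have "0 < b * (1 - p $ CD)"
        by simp
      with assms(2) have "p $ CD < 1"
        by (simp add: zero_less_mult_iff)
      then obtain d where "0 < d" "p + d *\<^sub>R axis CD 1 \<in> ?C"
        using interior_of_agreeable_shift[OF int] by blast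
      then have "a * p $ u \<le> b * (1 - p $ CD) - b * d"
        using assms(4) by (simp add: axis_def algebra_simps)
      moreover have "0 < b * d"
        using assms(2) \<open>0 < d\<close> by simp
      ultimately show False
        using eq by linarith
    qed
  qed
  with le show ?thesis
    by simp
qed

lemma interior_of_agreeable_CD_constraint:
  assumes "0 < a" and "0 < b" and "u \<noteq> CC" and "u \<noteq> CD"
  shows "top_of_set agreeable_strats interior_of (agreeable_strats \<inter> {q. a * q $ u \<le> b * (1 - q $ CD)})
    = agreeable_strats \<inter> {q. a * q $ u < b * (1 - q $ CD)}"
    (is "?X interior_of (_ \<inter> ?C) = _ \<inter> ?S")
proof
  have "openin ?X (agreeable_strats \<inter> ?S)"
    by (intro openin_open_Int open_Collect_less continuous_intros)
  then show "agreeable_strats \<inter> ?S \<subseteq> ?X interior_of (agreeable_strats \<inter> ?C)"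
    by (rule interior_of_maximal[rotated]) auto
  show "?X interior_of (agreeable_strats \<inter> ?C) \<subseteq> agreeable_strats \<inter> ?S"
  proof
    fix p
    assume int: "p \<in> ?X interior_of (agreeable_strats \<inter> ?C)"
    then have "p \<in> agreeable_strats"
      using subsetD[OF interior_of_subset int] by simp
    with CD_constraint_strict_if_interior_of[OF assms int] show "p \<in> agreeable_strats \<inter> ?S"
      by simp
  qed
qed

theorem corollary1p6:
  fixes R S T P :: real
  assumes "T > R" and "R > P" and "P > S" and "2 * R > T + S"
  shows "closed {p \<in> agreeable_strats. p = repeat_strat \<or> nash_type R S T P p}
    \<and> convex {p \<in> agreeable_strats. p = repeat_strat \<or> nash_type R S T P p}
    \<and> (top_of_set agreeable_strats) interior_of
        {p \<in> agreeable_strats. p = repeat_strat \<or> nash_type R S T P p}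
      = {p \<in> agreeable_strats. good R S T P p}"
proof -
  let ?A = agreeable_strats
  have nash: "{p \<in> ?A. p = repeat_strat \<or> nash_type R S T P p} =
      (?A \<inter> {q. (T - R) * q $ DC \<le> (R - S) * (1 - q $ CD)}) \<inter> (?A \<inter> {q. (T - R) * q $ DD \<le> (R - P) * (1 - q $ CD)})"
    using repeat_or_nash_type_iff_nash_ineqs[OF assms] by (auto simp: nash_ineqs_def)
  have good: "{p \<in> ?A. good R S T P p} =
      (?A \<inter> {q. (T - R) * q $ DC < (R - S) * (1 - q $ CD)}) \<inter> (?A \<inter> {q. (T - R) * q $ DD < (R - P) * (1 - q $ CD)})"
    using good_iff_good_ineqs[OF assms] by (auto simp: good_ineqs_def)
  show ?thesis
    unfolding nash good interior_of_Int[of "top_of_set ?A" "?A \<inter> _" "?A \<inter> _"]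
    using assms
    by (simp add: closed_Int closed_agreeable_strats closed_CD_constraint convex_Int convex_agreeable_strats
        convex_CD_constraint interior_of_agreeable_CD_constraint)
qed

end
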